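(* Let $\alpha\in(0,1)$ be irrational. Then for every integer $n\ge 1$, $$P_\alpha(n)=\#\bigl\{k\in\{1,\dots,n\}:\ k\alpha-\lfloor k\alpha\rfloor\le n\alpha-\lfloor n\alpha\rfloor\bigr\}.$$
   Context: A Sturmian sequence is an aperiodic (not eventually periodic) $1$-balanced sequence over a two-letter alphabet; here a sequence is $1$-balanced if for any two factors $u,v$ of equal length and each letter $x$, $\bigl||u|_x-|v|_x\bigr|\le 1$. For a finite word $w$ over $\{a,b\}$, its Parikh vector is $\Psi(w)=(|w|_a,|w|_b)^T$. For irrational $\alpha\in(0,1)$, let $\mathbf{u}$ be a Sturmian sequence over $\{a,b\}$ in which the letter $b$ has frequency $\alpha$ (the set of factors of such a sequence depends only on $\alpha$). For $n\ge1$, define $P_\alpha(n)$ as the number of factors $u$ of $\mathbf{u}$ of length $n$ with $\Psi(u)=(\lfloor(1-\alpha)n\rfloor,\lceil n\alpha\rceil)^T$. *)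

theory Defs
  imports Complex_Main
begin

datatype letter = La | Lb

definition factor :: "(nat \<Rightarrow> letter) \<Rightarrow> nat \<Rightarrow> nat \<Rightarrow> letter list" where
  "factor u i n = map u [i..<i+n]"

definition factors_len :: "(nat \<Rightarrow> letter) \<Rightarrow> nat \<Rightarrow> letter list set" where
  "factors_len u n = {w. \<exists>i. w = factor u i n}"

definition occ :: "letter list \<Rightarrow> letter \<Rightarrow> nat" where
  "occ w x = length (filter (\<lambda>y. y = x) w)"

definition balanced1 :: "(nat \<Rightarrow> letter) \<Rightarrow> bool" where
  "balanced1 u \<longleftrightarrow> (\<forall>n v w x. v \<in> factors_len u n \<longrightarrow> w \<in> factors_len u n \<longrightarrow>
      \<bar>int (occ v x) - int (occ w x)\<bar> \<le> 1)"

definition eventually_periodic :: "(nat \<Rightarrow> letter) \<Rightarrow> bool" where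
  "eventually_periodic u \<longleftrightarrow> (\<exists>p>0. \<exists>N. \<forall>i\<ge>N. u (i + p) = u i)"

definition sturmian :: "(nat \<Rightarrow> letter) \<Rightarrow> bool" where
  "sturmian u \<longleftrightarrow> balanced1 u \<and> \<not> eventually_periodic u"

definition has_freq :: "(nat \<Rightarrow> letter) \<Rightarrow> letter \<Rightarrow> real \<Rightarrow> bool" where
  "has_freq u x \<alpha> \<longleftrightarrow> (\<lambda>n. real (occ (factor u 0 n) x) / real n) \<longlonglongrightarrow> \<alpha>"

text \<open>P_alpha(n), computed from a Sturmian sequence u with frequency alpha of b.\<close>
definition P_count :: "(nat \<Rightarrow> letter) \<Rightarrow> real \<Rightarrow> nat \<Rightarrow> nat" where
  "P_count u \<alpha> n = card {w \<in> factors_len u n.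
      int (occ w La) = \<lfloor>(1 - \<alpha>) * real n\<rfloor> \<and> int (occ w Lb) = \<lceil>real n * \<alpha>\<rceil>}"

end

theory Submission
  imports Defs "HOL-Analysis.Kronecker_Approximation_Theorem"
begin

text \<open>
  In a balanced word with irrational frequency \<alpha> of the letter b, every factor of length
  \<open>m \<ge> 1\<close> contains either \<open>\<lfloor>m\<alpha>\<rfloor>\<close> or \<open>\<lfloor>m\<alpha>\<rfloor> + 1\<close> letters b. Normalising the discrepancy
  \<open>#\<^sub>b(prefix of length i) - i\<alpha>\<close> gives a phase \<open>y i \<in> [0,1]\<close> with
  \<open>#\<^sub>b(factor at i of length j) = j\<alpha> + y (i + j) - y i\<close>, so the prefix of length j of the
  factor at i is heavy when \<open>y i < {j\<alpha>}\<close> and light when \<open>{j\<alpha>} < y i\<close>.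
  A factor of length n is determined by which of its prefixes are heavy, and for the factors
  with \<open>\<lfloor>n\<alpha>\<rfloor> + 1\<close> letters b this set is \<open>{j \<le> n. {k\<alpha>} \<le> {j\<alpha>}}\<close> for a unique
  \<open>k \<le> n\<close> with \<open>{k\<alpha>} \<le> {n\<alpha>}\<close>. Every such k occurs, because the phases are dense in
  \<open>[0,1]\<close> by Kronecker's theorem.
\<close>

lemma occ_Nil [simp]: "occ [] x = 0"
  by (simp add: occ_def)

lemma occ_append [simp]: "occ (xs @ ys) x = occ xs x + occ ys x"
  by (simp add: occ_def)

lemma occ_single [simp]: "occ [y] x = (if y = x then 1 else 0)"
  by (simp add: occ_def)

lemma occ_La_plus_occ_Lb: "occ w La + occ w Lb = length w"
proof (induction w)
  case (Cons a w)
  then show ?case by (cases a) (simp_all add: occ_def)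
qed simp

lemma length_factor [simp]: "length (factor u i n) = n"
  by (simp add: factor_def)

lemma factor_add: "factor u i (m + k) = factor u i m @ factor u (i + m) k"
  using upt_add_eq_append[of i "i + m" k] by (simp add: factor_def add.assoc)

lemma take_factor: "j \<le> n \<Longrightarrow> take j (factor u i n) = factor u i j"
  by (simp add: factor_def take_map)

lemma factor_in_factors_len: "factor u i n \<in> factors_len u n"
  by (auto simp: factors_len_def)

lemma length_if_in_factors_len: "w \<in> factors_len u n \<Longrightarrow> length w = n"
  by (auto simp: factors_len_def)

lemma list_eq_if_prefix_occ_eq:
  assumes "length w = length v"
    and "\<And>j. j \<le> length w \<Longrightarrow> occ (take j w) x = occ (take j v) x"
  shows "w = v"
proof (rule nth_equalityI)
  fix p assume p: "p < length w"
  have "occ (take (Suc p) w) x = occ (take (Suc p) v) x" "occ (take p w) x = occ (take p v) x"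
    using assms p by simp_all
  then have "(w ! p = x) = (v ! p = x)"
    using p assms(1) by (simp add: take_Suc_conv_app_nth split: if_splits)
  then show "w ! p = v ! p"
    by (cases "w ! p"; cases "v ! p"; cases x) auto
qed (rule assms(1))

lemma of_nat_mult_irrational_notin_Ints:
  assumes "\<alpha> \<notin> \<rat>" "m \<ge> 1"
  shows "real m * \<alpha> \<notin> \<int>"
proof
  assume "real m * \<alpha> \<in> \<int>"
  then have "real m * \<alpha> / real m \<in> \<rat>"
    using Ints_subset_Rats by (blast intro: Rats_divide Rats_of_nat)
  with assms show False by simp
qed

lemma floor_less_of_nat_mult_irrational:
  assumes "\<alpha> \<notin> \<rat>" "m \<ge> 1"
  shows "of_int \<lfloor>real m * \<alpha>\<rfloor> < real m * \<alpha>"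
  using of_nat_mult_irrational_notin_Ints[OF assms] of_int_floor_le[of "real m * \<alpha>"]
  by (metis Ints_of_int order_le_less)

lemma frac_mult_irrational_inj:
  assumes "\<alpha> \<notin> \<rat>" "frac (real j * \<alpha>) = frac (real k * \<alpha>)"
  shows "j = k"
proof (rule ccontr)
  assume "j \<noteq> k"
  then have "real j - real k \<noteq> 0" by simp
  have "(real j - real k) * \<alpha> = of_int (\<lfloor>real j * \<alpha>\<rfloor> - \<lfloor>real k * \<alpha>\<rfloor>)"
    using assms(2) by (simp add: frac_def algebra_simps)
  then have "(real j - real k) * \<alpha> / (real j - real k) \<in> \<rat>"
    by (metis Rats_divide Rats_of_int Rats_of_nat Rats_diff)
  with \<open>real j - real k \<noteq> 0\<close> assms(1) show False by simp
qed

lemma occ_prefix_mult: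
  "occ (factor u 0 (q * m)) x = (\<Sum>p<q. occ (factor u (p * m) m) x)"
proof (induction q)
  case 0
  then show ?case by (simp add: factor_def)
next
  case (Suc q)
  then show ?case
    using factor_add[of u 0 "q * m" m] by (simp add: add.commute)
qed

lemma has_freq_along_multiples:
  assumes "has_freq u x \<alpha>" "m \<ge> 1"
  shows "(\<lambda>q. real (occ (factor u 0 (q * m)) x) / real (q * m)) \<longlonglongrightarrow> \<alpha>"
proof -
  have "strict_mono (\<lambda>q. q * m)"
    using assms(2) by (auto simp: strict_mono_def)
  from LIMSEQ_subseq_LIMSEQ[OF assms(1)[unfolded has_freq_def] this] show ?thesis
    by (simp add: o_def)
qed

lemma has_freq_le_if_factors_occ_le:
  assumes "has_freq u x \<alpha>" "m \<ge> 1" "\<And>i. real (occ (factor u i m) x) \<le> b"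
  shows "real m * \<alpha> \<le> b"
proof -
  have "\<alpha> \<le> b / real m"
  proof (rule LIMSEQ_le_const2[OF has_freq_along_multiples[OF assms(1,2)]], intro exI allI impI)
    fix q :: nat assume "q \<ge> 1"
    have "real (occ (factor u 0 (q * m)) x) \<le> real q * b"
      unfolding occ_prefix_mult of_nat_sum
      using sum_mono[of "{..<q}" "\<lambda>p. real (occ (factor u (p * m) m) x)" "\<lambda>_. b"] assms(3)
      by simp
    then show "real (occ (factor u 0 (q * m)) x) / real (q * m) \<le> b / real m"
      using \<open>q \<ge> 1\<close> assms(2) by (simp add: field_simps)
  qed
  with assms(2) show ?thesis by (simp add: field_simps)
qed

lemma has_freq_ge_if_factors_occ_ge:
  assumes "has_freq u x \<alpha>" "m \<ge> 1" "\<And>i. b \<le> real (occ (factor u i m) x)"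
  shows "b \<le> real m * \<alpha>"
proof -
  have "b / real m \<le> \<alpha>"
  proof (rule LIMSEQ_le_const[OF has_freq_along_multiples[OF assms(1,2)]], intro exI allI impI)
    fix q :: nat assume "q \<ge> 1"
    have "real q * b \<le> real (occ (factor u 0 (q * m)) x)"
      unfolding occ_prefix_mult of_nat_sum
      using sum_mono[of "{..<q}" "\<lambda>_. b" "\<lambda>p. real (occ (factor u (p * m) m) x)"] assms(3)
      by simp
    then show "b / real m \<le> real (occ (factor u 0 (q * m)) x) / real (q * m)"
      using \<open>q \<ge> 1\<close> assms(2) by (simp add: field_simps)
  qed
  with assms(2) show ?thesis by (simp add: field_simps)
qed

lemma irrational_rotation_hits_interval:
  fixes y :: "nat \<Rightarrow> real"
  assumes "\<alpha> \<notin> \<rat>" "0 \<le> lo" "lo < hi" "hi \<le> 1"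
    and y_range: "\<And>i. 0 \<le> y i \<and> y i \<le> 1"
    and y_mod_1: "\<And>i. y i + real i * \<alpha> - s \<in> \<int>"
  obtains i where "lo < y i" "y i < hi"
proof -
  define mid where "mid = (lo + hi) / 2"
  obtain h k where "k > 0" and hk: "\<bar>of_int k * (- \<alpha>) - of_int h - (mid - s)\<bar> < (hi - lo) / 2"
    by (rule sequence_of_fractional_parts_is_dense[of "- \<alpha>" "(hi - lo) / 2" "mid - s"])
      (use assms(1,3) in auto)
  define i where "i = nat k"
  obtain z where z: "y i + real i * \<alpha> - s = of_int z"
    using y_mod_1 by (meson Ints_cases)
  define e where "e = of_int k * (- \<alpha>) - of_int h - (mid - s)"
  have "y i = of_int (z + h) + mid + e"
    using z \<open>k > 0\<close> by (simp add: e_def i_def algebra_simps)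
  moreover have "lo < mid + e" "mid + e < hi"
    using hk by (simp_all add: e_def mid_def abs_less_iff field_simps)
  ultimately have "- 1 < real_of_int (z + h)" "real_of_int (z + h) < 1"
    using y_range[of i] assms(2,4) by linarith+
  then have "z + h = 0" by linarith
  with \<open>y i = _\<close> \<open>lo < mid + e\<close> \<open>mid + e < hi\<close> show thesis
    using that[of i] by simp
qed

locale balanced_irrational_freq =
  fixes u :: "nat \<Rightarrow> letter" and \<alpha> :: real
  assumes irrational: "\<alpha> \<notin> \<rat>" and balanced: "balanced1 u" and freq: "has_freq u Lb \<alpha>"
begin

lemma factor_occ_Lb_le_Suc: "real (occ (factor u j m) Lb) \<le> real (occ (factor u i m) Lb) + 1"
proof -
  have "\<bar>int (occ (factor u j m) Lb) - int (occ (factor u i m) Lb)\<bar> \<le> 1"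
    using balanced factor_in_factors_len unfolding balanced1_def by blast
  then show ?thesis by linarith
qed

lemma factor_occ_Lb_cases:
  assumes "m \<ge> 1"
  shows "int (occ (factor u i m) Lb) = \<lfloor>real m * \<alpha>\<rfloor> \<or>
    int (occ (factor u i m) Lb) = \<lfloor>real m * \<alpha>\<rfloor> + 1"
proof -
  define a where "a = occ (factor u i m) Lb"
  have "real m * \<alpha> \<le> real a + 1"
    using factor_occ_Lb_le_Suc[of _ m i] unfolding a_def
    by (intro has_freq_le_if_factors_occ_le[OF freq assms])
  moreover have "real a - 1 \<le> real m * \<alpha>"
    using factor_occ_Lb_le_Suc[of i m] unfolding a_def
    by (intro has_freq_ge_if_factors_occ_ge[OF freq assms]) (simp add: algebra_simps)
  moreover have "real m * \<alpha> \<noteq> real a + 1" "real m * \<alpha> \<noteq> real a - 1"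
    using of_nat_mult_irrational_notin_Ints[OF irrational assms]
    by (metis Ints_of_nat Ints_1 Ints_add Ints_diff)+
  ultimately have "real a - 1 < real m * \<alpha>" "real m * \<alpha> < real a + 1"
    by linarith+
  then have "int a - 1 \<le> \<lfloor>real m * \<alpha>\<rfloor>" "\<lfloor>real m * \<alpha>\<rfloor> \<le> int a"
    by (simp_all add: le_floor_iff floor_le_iff)
  then show ?thesis unfolding a_def by linarith
qed

definition discrepancy :: "nat \<Rightarrow> real" where
  "discrepancy i = real (occ (factor u 0 i) Lb) - real i * \<alpha>"

lemma discrepancy_add:
  "discrepancy (i + m) - discrepancy i = real (occ (factor u i m) Lb) - real m * \<alpha>"
  using factor_add[of u 0 i m] by (simp add: discrepancy_def algebra_simps)

lemma discrepancy_add_bounded: "\<bar>discrepancy (i + m) - discrepancy i\<bar> < 1"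
proof (cases "m = 0")
  case False
  then have "m \<ge> 1" by simp
  have "of_int \<lfloor>real m * \<alpha>\<rfloor> < real m * \<alpha>" "real m * \<alpha> < of_int \<lfloor>real m * \<alpha>\<rfloor> + 1"
    using floor_less_of_nat_mult_irrational[OF irrational \<open>m \<ge> 1\<close>] by linarith+
  moreover have "real (occ (factor u i m) Lb) = of_int \<lfloor>real m * \<alpha>\<rfloor> \<or>
      real (occ (factor u i m) Lb) = of_int \<lfloor>real m * \<alpha>\<rfloor> + 1"
    using factor_occ_Lb_cases[OF \<open>m \<ge> 1\<close>, of i] by (metis of_int_1 of_int_add of_int_of_nat_eq)
  ultimately show ?thesis
    unfolding discrepancy_add abs_less_iff by linarith
qed simp

lemma discrepancy_bounded: "\<bar>discrepancy j - discrepancy i\<bar> < 1"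
  using discrepancy_add_bounded[of i "j - i"] discrepancy_add_bounded[of j "i - j"]
  by (cases "i \<le> j") auto

definition phase :: "nat \<Rightarrow> real" where
  "phase i = discrepancy i - (INF j. discrepancy j)"

lemma phase_bounds: "0 \<le> phase i" "phase i \<le> 1"
proof -
  have "discrepancy i - 1 \<le> discrepancy j" for i j
    using discrepancy_bounded[of j i] by linarith
  then have "bdd_below (range discrepancy)"
    by (intro bdd_belowI2)
  then show "0 \<le> phase i"
    by (simp add: phase_def cINF_lower)
  have "discrepancy i - 1 \<le> (INF j. discrepancy j)"
    using \<open>\<And>i j. discrepancy i - 1 \<le> discrepancy j\<close> by (intro cINF_greatest) auto
  then show "phase i \<le> 1"
    by (simp add: phase_def)
qed

lemma factor_occ_Lb_eq_phase:
  "real (occ (factor u i j) Lb) = real j * \<alpha> + phase (i + j) - phase i"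
  using discrepancy_add[of i j] by (simp add: phase_def)

lemma factor_heavy_if_phase_less_frac:
  assumes "j \<ge> 1" "phase i < frac (real j * \<alpha>)"
  shows "int (occ (factor u i j) Lb) = \<lfloor>real j * \<alpha>\<rfloor> + 1"
proof -
  have "of_int \<lfloor>real j * \<alpha>\<rfloor> < real (occ (factor u i j) Lb)"
    using factor_occ_Lb_eq_phase[of i j] phase_bounds(1)[of "i + j"] assms(2)
    by (simp add: frac_def)
  then show ?thesis
    using factor_occ_Lb_cases[OF assms(1), of i] by auto
qed

lemma factor_light_if_frac_less_phase:
  assumes "j \<ge> 1" "frac (real j * \<alpha>) < phase i"
  shows "int (occ (factor u i j) Lb) = \<lfloor>real j * \<alpha>\<rfloor>"
proof -
  have "real (occ (factor u i j) Lb) < of_int \<lfloor>real j * \<alpha>\<rfloor> + 1"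
    using factor_occ_Lb_eq_phase[of i j] phase_bounds(2)[of "i + j"] assms(2)
    by (simp add: frac_def)
  then show ?thesis
    using factor_occ_Lb_cases[OF assms(1), of i] by auto
qed

lemma phase_hits_interval:
  assumes "0 \<le> lo" "lo < hi" "hi \<le> 1"
  obtains i where "lo < phase i" "phase i < hi"
  by (rule irrational_rotation_hits_interval[OF irrational assms,
        of phase "- (INF j. discrepancy j)"])
    (use phase_bounds in \<open>auto simp: phase_def discrepancy_def\<close>)

definition heavy_prefixes :: "letter list \<Rightarrow> nat set" where
  "heavy_prefixes w = {j \<in> {1..length w}. int (occ (take j w) Lb) = \<lfloor>real j * \<alpha>\<rfloor> + 1}"

definition frac_above :: "nat \<Rightarrow> nat \<Rightarrow> nat set" where
  "frac_above n k = {j \<in> {1..n}. frac (real k * \<alpha>) \<le> frac (real j * \<alpha>)}"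

lemma prefix_occ_Lb_eq:
  assumes "w \<in> factors_len u n" "j \<in> {1..n}"
  shows "int (occ (take j w) Lb) = \<lfloor>real j * \<alpha>\<rfloor> + (if j \<in> heavy_prefixes w then 1 else 0)"
proof -
  obtain i where "w = factor u i n"
    using assms(1) by (auto simp: factors_len_def)
  then show ?thesis
    using factor_occ_Lb_cases[of j i] assms(2) by (auto simp: heavy_prefixes_def take_factor)
qed

lemma inj_on_heavy_prefixes: "inj_on heavy_prefixes (factors_len u n)"
proof (rule inj_onI)
  fix w v assume w: "w \<in> factors_len u n" and v: "v \<in> factors_len u n"
    and eq: "heavy_prefixes w = heavy_prefixes v"
  show "w = v"
  proof (rule list_eq_if_prefix_occ_eq[where x = Lb])
    show "length w = length v"
      using w v by (simp add: length_if_in_factors_len)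
    fix j assume "j \<le> length w"
    then show "occ (take j w) Lb = occ (take j v) Lb"
      using prefix_occ_Lb_eq[OF w, of j] prefix_occ_Lb_eq[OF v, of j] eq
        length_if_in_factors_len[OF w]
      by (cases "j = 0") auto
  qed
qed

lemma heavy_prefixes_upward_closed:
  assumes "j \<in> heavy_prefixes (factor u i n)" "j' \<in> {1..n}"
    and "frac (real j * \<alpha>) < frac (real j' * \<alpha>)"
  shows "j' \<in> heavy_prefixes (factor u i n)"
proof -
  have "j \<ge> 1" "int (occ (factor u i j) Lb) = \<lfloor>real j * \<alpha>\<rfloor> + 1"
    using assms(1) by (auto simp: heavy_prefixes_def take_factor)
  then have "\<not> frac (real j * \<alpha>) < phase i"
    using factor_light_if_frac_less_phase by fastforce
  with assms(3) have "phase i < frac (real j' * \<alpha>)"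
    by linarith
  then show ?thesis
    using factor_heavy_if_phase_less_frac assms(2) by (auto simp: heavy_prefixes_def take_factor)
qed

lemma heavy_prefixes_eq_frac_above:
  assumes "w \<in> factors_len u n" "n \<in> heavy_prefixes w"
  obtains k where "k \<in> {1..n}" "heavy_prefixes w = frac_above n k"
proof -
  obtain i where w: "w = factor u i n"
    using assms(1) by (auto simp: factors_len_def)
  have "finite (heavy_prefixes w)"
    by (simp add: heavy_prefixes_def)
  then obtain k where "is_arg_min (\<lambda>j. frac (real j * \<alpha>)) (\<lambda>j. j \<in> heavy_prefixes w) k"
    using ex_is_arg_min_if_finite assms(2) by blast
  then have k: "k \<in> heavy_prefixes w"
    and k_min: "\<And>j. j \<in> heavy_prefixes w \<Longrightarrow> frac (real k * \<alpha>) \<le> frac (real j * \<alpha>)"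
    by (auto simp: is_arg_min_linorder)
  have "heavy_prefixes w = frac_above n k"
  proof (intro set_eqI iffI)
    fix j assume "j \<in> heavy_prefixes w"
    then show "j \<in> frac_above n k"
      using k_min by (auto simp: frac_above_def heavy_prefixes_def w)
  next
    fix j assume j: "j \<in> frac_above n k"
    show "j \<in> heavy_prefixes w"
    proof (cases "frac (real k * \<alpha>) = frac (real j * \<alpha>)")
      case True
      then show ?thesis
        using frac_mult_irrational_inj[OF irrational] k by metis
    next
      case False
      then show ?thesis
        using heavy_prefixes_upward_closed[of k i n j] j k by (auto simp: frac_above_def w)
    qed
  qed
  moreover have "k \<in> {1..n}"
    using k by (simp add: heavy_prefixes_def w)
  ultimately show thesis
    using that by blast
qed

lemma frac_above_realized:
  assumes "k \<in> {1..n}"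
  obtains i where "heavy_prefixes (factor u i n) = frac_above n k"
proof -
  let ?fr = "\<lambda>j. frac (real j * \<alpha>)"
  define S where "S = insert 0 (?fr ` {j \<in> {1..n}. ?fr j < ?fr k})"
  have "finite S"
    by (simp add: S_def)
  have Max_S_nonneg: "0 \<le> Max S"
    using \<open>finite S\<close> by (rule Max_ge) (simp add: S_def)
  have le_Max_S: "?fr j \<le> Max S" if "j \<in> {1..n}" "?fr j < ?fr k" for j
    using \<open>finite S\<close> by (rule Max_ge) (use that in \<open>simp add: S_def\<close>)
  have "0 < ?fr k"
    using of_nat_mult_irrational_notin_Ints[OF irrational] assms by simp
  then have "Max S < ?fr k"
    using \<open>finite S\<close> by (subst Max_less_iff) (auto simp: S_def)
  \<comment> \<open>A phase strictly between {k\<alpha>} and every smaller {j\<alpha>} makes exactly \<open>frac_above n k\<close> heavy.\<close>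
  then obtain i where i: "Max S < phase i" "phase i < ?fr k"
    by (rule phase_hits_interval[OF Max_S_nonneg _ less_imp_le[OF frac_lt_1]])
  have "j \<in> heavy_prefixes (factor u i n) \<longleftrightarrow> j \<in> frac_above n k" for j
  proof (cases "j \<in> {1..n}")
    case True
    show ?thesis
    proof (cases "?fr k \<le> ?fr j")
      case True
      with i(2) have "phase i < ?fr j"
        by linarith
      then show ?thesis
        using factor_heavy_if_phase_less_frac[of j i] \<open>j \<in> {1..n}\<close> True
        by (simp add: heavy_prefixes_def frac_above_def take_factor)
    next
      case False
      then have "?fr j < phase i"
        using le_Max_S[OF \<open>j \<in> {1..n}\<close>] i(1) by fastforce
      then show ?thesis
        using factor_light_if_frac_less_phase[of j i] \<open>j \<in> {1..n}\<close> False
        by (simp add: heavy_prefixes_def frac_above_def take_factor)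
    qed
  qed (auto simp: heavy_prefixes_def frac_above_def)
  then show thesis
    using that by blast
qed

lemma inj_on_frac_above: "inj_on (frac_above n) {1..n}"
proof (rule inj_onI)
  fix k k' assume "k \<in> {1..n}" "k' \<in> {1..n}" "frac_above n k = frac_above n k'"
  then have "k \<in> frac_above n k'" "k' \<in> frac_above n k"
    by (auto simp: frac_above_def)
  then have "frac (real k * \<alpha>) = frac (real k' * \<alpha>)"
    by (simp add: frac_above_def)
  then show "k = k'"
    by (rule frac_mult_irrational_inj[OF irrational])
qed

lemma card_heavy_factors:
  assumes "n \<ge> 1"
  shows "card {w \<in> factors_len u n. int (occ w Lb) = \<lfloor>real n * \<alpha>\<rfloor> + 1} =
    card {k \<in> {1..n}. frac (real k * \<alpha>) \<le> frac (real n * \<alpha>)}"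
    (is "card ?H = card ?K")
proof -
  have H: "?H = {w \<in> factors_len u n. n \<in> heavy_prefixes w}"
    using assms by (auto simp: heavy_prefixes_def length_if_in_factors_len)
  have "heavy_prefixes ` ?H = frac_above n ` ?K"
  proof (intro equalityI image_subsetI)
    fix w assume "w \<in> ?H"
    then have "w \<in> factors_len u n" "n \<in> heavy_prefixes w"
      unfolding H by auto
    then obtain k where "k \<in> {1..n}" "heavy_prefixes w = frac_above n k"
      by (rule heavy_prefixes_eq_frac_above)
    moreover from this \<open>n \<in> heavy_prefixes w\<close> have "k \<in> ?K"
      by (simp add: frac_above_def)
    ultimately show "heavy_prefixes w \<in> frac_above n ` ?K"
      by (intro rev_image_eqI)
  next
    fix k assume "k \<in> ?K"
    then have "k \<in> {1..n}"
      by simp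
    then obtain i where "heavy_prefixes (factor u i n) = frac_above n k"
      by (rule frac_above_realized)
    moreover have "n \<in> frac_above n k"
      using \<open>k \<in> ?K\<close> assms by (simp add: frac_above_def)
    ultimately have "factor u i n \<in> ?H"
      by (simp add: H factor_in_factors_len)
    then show "frac_above n k \<in> heavy_prefixes ` ?H"
      by (rule rev_image_eqI) (simp add: \<open>heavy_prefixes (factor u i n) = frac_above n k\<close>)
  qed
  have "inj_on heavy_prefixes ?H"
    by (rule inj_on_subset[OF inj_on_heavy_prefixes]) auto
  then have "card ?H = card (heavy_prefixes ` ?H)"
    by (simp add: card_image)
  also have "\<dots> = card (frac_above n ` ?K)"
    by (simp add: \<open>heavy_prefixes ` ?H = frac_above n ` ?K\<close>)
  also have "\<dots> = card ?K"
    by (rule card_image, rule inj_on_subset[OF inj_on_frac_above]) auto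
  finally show ?thesis .
qed

end

lemma P_count_eq_card_heavy_factors:
  assumes "\<alpha> \<notin> \<rat>" "n \<ge> 1"
  shows "P_count u \<alpha> n = card {w \<in> factors_len u n. int (occ w Lb) = \<lfloor>real n * \<alpha>\<rfloor> + 1}"
proof -
  have floor_less: "of_int \<lfloor>real n * \<alpha>\<rfloor> < real n * \<alpha>"
    by (rule floor_less_of_nat_mult_irrational[OF assms])
  then have ceiling: "\<lceil>real n * \<alpha>\<rceil> = \<lfloor>real n * \<alpha>\<rfloor> + 1"
    by (simp add: ceiling_altdef)
  have floor_compl: "\<lfloor>(1 - \<alpha>) * real n\<rfloor> = int n - \<lfloor>real n * \<alpha>\<rfloor> - 1"
  proof (rule floor_unique)
    have "real n * \<alpha> < of_int \<lfloor>real n * \<alpha>\<rfloor> + 1"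
      by linarith
    then show "of_int (int n - \<lfloor>real n * \<alpha>\<rfloor> - 1) \<le> (1 - \<alpha>) * real n"
      by (simp add: algebra_simps)
    show "(1 - \<alpha>) * real n < of_int (int n - \<lfloor>real n * \<alpha>\<rfloor> - 1) + 1"
      using floor_less by (simp add: algebra_simps)
  qed
  have "int (occ w La) = int n - int (occ w Lb)" if "w \<in> factors_len u n" for w
    using occ_La_plus_occ_Lb[of w] length_if_in_factors_len[OF that] by simp
  then have "{w \<in> factors_len u n. int (occ w La) = int n - \<lfloor>real n * \<alpha>\<rfloor> - 1 \<and>
        int (occ w Lb) = \<lfloor>real n * \<alpha>\<rfloor> + 1} =
      {w \<in> factors_len u n. int (occ w Lb) = \<lfloor>real n * \<alpha>\<rfloor> + 1}"
    by auto
  then show ?thesis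
    unfolding P_count_def ceiling floor_compl by simp
qed

theorem lemma2:
  fixes u :: "nat \<Rightarrow> letter" and \<alpha> :: real and n :: nat
  assumes "\<alpha> \<notin> \<rat>" and "0 < \<alpha>" and "\<alpha> < 1"
    and "sturmian u" and "has_freq u Lb \<alpha>"
    and "n \<ge> 1"
  shows "P_count u \<alpha> n =
    card {k \<in> {1..n}. real k * \<alpha> - \<lfloor>real k * \<alpha>\<rfloor> \<le> real n * \<alpha> - \<lfloor>real n * \<alpha>\<rfloor>}"
proof -
  interpret balanced_irrational_freq u \<alpha>
    using assms by unfold_locales (auto simp: sturmian_def)
  show ?thesis
    using P_count_eq_card_heavy_factors[OF assms(1,6)] card_heavy_factors[OF assms(6)]
    by (simp add: frac_def)
qed

end
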